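(* Let $R>r>0$ with $R/r>\sqrt{2}$. Then the standard torus $T_{R,r}$ is conformally equivalent to the Hopf torus $\pi^{-1}(p_t)\subset S^3$ (with the metric induced from $S^3$) associated to the circle $p_t$ in $S^2$ parametrized by $$s\mapsto (2t^2-1)+2t\sqrt{1-t^2}\,(\cos(s)\,j+\sin(s)\,k),$$ where $t=r/R$.
   Context: For $R>r>0$, the standard torus $T_{R,r}\subset\mathbb{R}^3$ is the image of $\Phi(\theta,\varphi)=\big((R+r\cos\varphi)\cos\theta,(R+r\cos\varphi)\sin\theta,r\sin\varphi\big)$, $(\theta,\varphi)\in\mathbb{R}^2$, equipped with the complex structure induced by the Euclidean metric of $\mathbb{R}^3$. $Q$ denotes the quaternions, $S^3\subset Q$ the unit quaternions with the round metric, and $S^2$ is identified with the unit sphere in the real span of $1,j,k$. For $q=a+bi+cj+dk$ set $\tilde q=a-bi+cj+dk$; the Hopf map is $\pi:S^3\to S^2$, $\pi(q)=\tilde q q$. The Hopf torus associated to a closed curve $p$ in $S^2$ is $\pi^{-1}(p)$ with the complex structure induced by the metric inherited from $S^3$. *)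

theory Defs
  imports "HOL-Analysis.Analysis"
begin

definition torus_param :: "real \<Rightarrow> real \<Rightarrow> real \<times> real \<Rightarrow> real^3" where
  "torus_param R r = (\<lambda>(\<theta>, \<phi>). vector [(R + r * cos \<phi>) * cos \<theta>,
                                       (R + r * cos \<phi>) * sin \<theta>,
                                       r * sin \<phi>])"

definition std_torus :: "real \<Rightarrow> real \<Rightarrow> (real^3) set" where
  "std_torus R r = range (torus_param R r)"

text \<open>Quaternions a + b i + c j + d k represented as vectors (a,b,c,d) in R^4.\<close>
definition qmul :: "real^4 \<Rightarrow> real^4 \<Rightarrow> real^4" where
  "qmul p q = vector
     [p$1 * q$1 - p$2 * q$2 - p$3 * q$3 - p$4 * q$4,
      p$1 * q$2 + p$2 * q$1 + p$3 * q$4 - p$4 * q$3,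
      p$1 * q$3 - p$2 * q$4 + p$3 * q$1 + p$4 * q$2,
      p$1 * q$4 + p$2 * q$3 - p$3 * q$2 + p$4 * q$1]"

definition qtilde :: "real^4 \<Rightarrow> real^4" where
  "qtilde q = vector [q$1, - q$2, q$3, q$4]"

definition hopf :: "real^4 \<Rightarrow> real^4" where
  "hopf q = qmul (qtilde q) q"

text \<open>Hopf torus over a closed curve p in S^2 (S^2 = unit sphere in span of 1, j, k).\<close>
definition hopf_torus :: "(real \<Rightarrow> real^4) \<Rightarrow> (real^4) set" where
  "hopf_torus p = {q \<in> sphere 0 1. hopf q \<in> range p}"

definition circle_pt :: "real \<Rightarrow> real \<Rightarrow> real^4" where
  "circle_pt t s = vector [2 * t^2 - 1, 0,
                           2 * t * sqrt (1 - t^2) * cos s,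
                           2 * t * sqrt (1 - t^2) * sin s]"

definition conformally_equivalent ::
  "(real \<times> real \<Rightarrow> 'a::euclidean_space) \<Rightarrow> 'b::euclidean_space set \<Rightarrow> bool" where
  "conformally_equivalent \<Phi> Y \<longleftrightarrow>
     (\<exists>F G D lam.
        homeomorphism (range \<Phi>) Y F G \<and>
        (\<forall>p. ((F \<circ> \<Phi>) has_derivative blinfun_apply (D p)) (at p)) \<and>
        continuous_on UNIV D \<and>
        (\<forall>p. lam p > (0::real) \<and>
             (\<forall>u v. blinfun_apply (D p) u \<bullet> blinfun_apply (D p) v =
                    lam p * (frechet_derivative \<Phi> (at p) u \<bullet> frechet_derivative \<Phi> (at p) v))))"

end

theory Submission
  imports Defs
begin

text \<open>
  With \<rho> = R + r cos \<phi>, the torus metric \<rho>^2 d\<theta>^2 + r^2 d\<phi>^2 is conformal to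
  d\<theta>^2 + (r / \<rho>)^2 d\<phi>^2, which becomes flat in the angle \<psi> with
  d\<psi>/d\<phi> = sqrt (R^2 - r^2) / \<rho>. On points of the unit circle this substitution is a real
  Moebius transformation, hence a diffeomorphism of the circle. So, for t = r / R, the map
  (\<theta>, \<phi>) \<mapsto> (t e^(i\<psi>), sqrt (1 - t^2) e^(i\<theta>)) \<in> \<complex>^2 = Q induces a homeomorphism of the
  torus onto the Clifford torus |z1| = t, |z2| = sqrt (1 - t^2) in S^3 which is conformal with
  factor (1 - t^2) / \<rho>^2. The first coordinate of the Hopf map is |z1|^2 - |z2|^2, and this
  Clifford torus is exactly the Hopf preimage of the circle of height 2 t^2 - 1.
\<close>

lemma vector_4 [simp]:
  "(vector [x, y, z, w] :: 'a::zero^4) $ 1 = x"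
  "(vector [x, y, z, w] :: 'a::zero^4) $ 2 = y"
  "(vector [x, y, z, w] :: 'a::zero^4) $ 3 = z"
  "(vector [x, y, z, w] :: 'a::zero^4) $ 4 = w"
  unfolding vector_def by simp_all

lemma vector_3_eq_sum_axis:
  "(vector [a, b, c] :: real^3) = a *\<^sub>R axis 1 1 + b *\<^sub>R axis 2 1 + c *\<^sub>R axis 3 1"
  by (simp add: vec_eq_iff forall_3 axis_def)

lemma vector_4_eq_sum_axis:
  "(vector [a, b, c, d] :: real^4) =
     a *\<^sub>R axis 1 1 + b *\<^sub>R axis 2 1 + c *\<^sub>R axis 3 1 + d *\<^sub>R axis 4 1"
  by (simp add: vec_eq_iff forall_4 axis_def)

lemma inner_vector_3:
  "(vector [a, b, c] :: real^3) \<bullet> vector [a', b', c'] = a * a' + b * b' + c * c'"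
  by (simp add: inner_vec_def sum_3)

lemma inner_vector_4:
  "(vector [a, b, c, d] :: real^4) \<bullet> vector [a', b', c', d'] = a * a' + b * b' + c * c' + d * d'"
  by (simp add: inner_vec_def sum_4)

lemma has_derivative_vector_3:
  assumes "(f1 has_derivative f1') F" "(f2 has_derivative f2') F" "(f3 has_derivative f3') F"
  shows "((\<lambda>x. vector [f1 x, f2 x, f3 x] :: real^3) has_derivative
           (\<lambda>u. vector [f1' u, f2' u, f3' u])) F"
  unfolding vector_3_eq_sum_axis by (intro has_derivative_add has_derivative_scaleR_left assms)

lemma has_derivative_vector_4:
  assumes "(f1 has_derivative f1') F" "(f2 has_derivative f2') F"
    and "(f3 has_derivative f3') F" "(f4 has_derivative f4') F"
  shows "((\<lambda>x. vector [f1 x, f2 x, f3 x, f4 x] :: real^4) has_derivative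
           (\<lambda>u. vector [f1' u, f2' u, f3' u, f4' u])) F"
  unfolding vector_4_eq_sum_axis by (intro has_derivative_add has_derivative_scaleR_left assms)

lemma continuous_on_vector_3:
  assumes "continuous_on S f1" "continuous_on S f2" "continuous_on S f3"
  shows "continuous_on S (\<lambda>x. vector [f1 x, f2 x, f3 x] :: real^3)"
  unfolding vector_3_eq_sum_axis by (intro continuous_intros assms)

lemma continuous_on_vector_4:
  assumes "continuous_on S f1" "continuous_on S f2" "continuous_on S f3" "continuous_on S f4"
  shows "continuous_on S (\<lambda>x. vector [f1 x, f2 x, f3 x, f4 x] :: real^4)"
  unfolding vector_4_eq_sum_axis by (intro continuous_intros assms)

lemma has_derivative_comp_fst:
  assumes "(g has_real_derivative g') (at (fst p))"
  shows "((\<lambda>p. g (fst p)) has_derivative (\<lambda>u. fst u * g')) (at p)"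
  using has_derivative_compose[OF has_derivative_fst[OF has_derivative_ident]
      has_field_derivative_imp_has_derivative[OF assms]]
  by (simp add: mult.commute)

lemma has_derivative_comp_snd:
  assumes "(g has_real_derivative g') (at (snd p))"
  shows "((\<lambda>p. g (snd p)) has_derivative (\<lambda>u. snd u * g')) (at p)"
  using has_derivative_compose[OF has_derivative_snd[OF has_derivative_ident]
      has_field_derivative_imp_has_derivative[OF assms]]
  by (simp add: mult.commute)

lemma homeomorphism_apsnd:
  assumes "homeomorphism S T f g"
  shows "homeomorphism (A \<times> S) (A \<times> T) (apsnd f) (apsnd g)"
proof -
  have "continuous_on S f" "continuous_on T g" "f ` S = T" "g ` T = S"
    using assms by (simp_all add: homeomorphism_def)
  then have "continuous_on (A \<times> S) (apsnd f)" "continuous_on (A \<times> T) (apsnd g)"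
    unfolding apsnd_def map_prod_def split_def
    by (auto intro!: continuous_intros elim!: continuous_on_compose2)
  then show ?thesis
    using assms by (auto simp: homeomorphism_def image_iff apsnd_def map_prod_def)
qed

lemma range_map_prod_cis: "range (map_prod cis cis) = sphere 0 1 \<times> sphere 0 1"
proof -
  have "z \<in> range cis" if "z \<in> sphere 0 1" for z
  proof
    show "z = cis (Arg z)" using that cis_Arg[of z] by (force simp: sgn_div_norm)
  qed simp
  then have "range cis = sphere 0 1" by auto
  then show ?thesis by (metis UNIV_Times_UNIV map_prod_surj_on)
qed

definition partials_map :: "'a::real_vector \<Rightarrow> 'a \<Rightarrow> real \<times> real \<Rightarrow> 'a" where
  "partials_map a b u = fst u *\<^sub>R a + snd u *\<^sub>R b"

lemma bounded_linear_partials_map: "bounded_linear (partials_map a b)"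
  unfolding partials_map_def by (intro bounded_linear_intros)

lemma inner_partials_map_conformal:
  fixes a b :: "'a::real_inner" and c d :: "'b::real_inner"
  assumes "a \<bullet> b = 0" "c \<bullet> d = 0" "c \<bullet> c = \<mu> * (a \<bullet> a)" "d \<bullet> d = \<mu> * (b \<bullet> b)"
  shows "partials_map c d u \<bullet> partials_map c d v = \<mu> * (partials_map a b u \<bullet> partials_map a b v)"
  using assms by (simp add: partials_map_def inner_add inner_commute algebra_simps)

lemma continuous_on_Blinfun_partials_map:
  fixes a b :: "'a::t2_space \<Rightarrow> 'b::real_normed_vector"
  assumes "continuous_on UNIV a" "continuous_on UNIV b"
  shows "continuous_on UNIV (\<lambda>p. Blinfun (partials_map (a p) (b p)))"
  using assms
  by (intro continuous_on_blinfun_componentwise)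
    (simp add: bounded_linear_Blinfun_apply bounded_linear_partials_map partials_map_def
      continuous_intros)

section \<open>The Hopf torus over a circle of latitude\<close>

definition clifford_torus :: "real \<Rightarrow> (real^4) set" where
  "clifford_torus t = {y. (y$1)^2 + (y$2)^2 = t^2 \<and> (y$3)^2 + (y$4)^2 = 1 - t^2}"

lemma hopf_eq_vector:
  "hopf q = vector [(q$1)^2 + (q$2)^2 - (q$3)^2 - (q$4)^2, 0,
                    2 * (q$1 * q$3 + q$2 * q$4), 2 * (q$1 * q$4 - q$2 * q$3)]"
  by (simp add: hopf_def qmul_def qtilde_def vec_eq_iff forall_4 power2_eq_square algebra_simps)

lemma hopf_torus_circle_pt:
  assumes "0 < t" "t < 1"
  shows "hopf_torus (circle_pt t) = clifford_torus t"
proof (intro set_eqI iffI)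
  fix q assume "q \<in> hopf_torus (circle_pt t)"
  then obtain s where unit: "(q$1)^2 + (q$2)^2 + (q$3)^2 + (q$4)^2 = 1"
    and "hopf q = circle_pt t s"
    by (auto simp: hopf_torus_def norm_eq_1 inner_vec_def sum_4 power2_eq_square)
  then have "(q$1)^2 + (q$2)^2 - (q$3)^2 - (q$4)^2 = 2 * t^2 - 1"
    by (metis circle_pt_def hopf_eq_vector vector_4(1))
  with unit show "q \<in> clifford_torus t" by (simp add: clifford_torus_def)
next
  fix q :: "real^4" assume "q \<in> clifford_torus t"
  then have a: "(q$1)^2 + (q$2)^2 = t^2" and b: "(q$3)^2 + (q$4)^2 = 1 - t^2"
    by (simp_all add: clifford_torus_def)
  define K where "K = 2 * t * sqrt (1 - t^2)"
  have "t^2 < 1" using assms by (simp add: power_less_one_iff abs_less_iff)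
  then have K: "K > 0" "K^2 = 4 * t^2 * (1 - t^2)"
    using assms by (simp_all add: K_def power_mult_distrib)
  define X where "X = q$1 * q$3 + q$2 * q$4"
  define Y where "Y = q$1 * q$4 - q$2 * q$3"
  \<comment> \<open>Lagrange's identity for the product of the two sums of squares\<close>
  have "X^2 + Y^2 = ((q$1)^2 + (q$2)^2) * ((q$3)^2 + (q$4)^2)"
    by (simp add: X_def Y_def power2_eq_square algebra_simps)
  also have "\<dots> = (K / 2)^2" using a b K(2) by (simp add: power_divide)
  finally have "(2 * X / K)^2 + (2 * Y / K)^2 = 1"
    using K(1) by (simp add: power_divide power_mult_distrib add_divide_distrib [symmetric])
  then obtain s where "2 * X / K = cos s" "2 * Y / K = sin s"
    using sincos_total_2pi by metis
  then have "hopf q = circle_pt t s"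
    using K(1) a b unfolding hopf_eq_vector circle_pt_def K_def [symmetric] X_def Y_def
    by (simp add: vec_eq_iff forall_4 field_simps)
  moreover have "norm q = 1" using a b
    by (simp add: norm_eq_1 inner_vec_def sum_4 power2_eq_square)
  ultimately show "q \<in> hopf_torus (circle_pt t)" by (auto simp: hopf_torus_def)
qed

definition clifford_point :: "real \<Rightarrow> complex \<times> complex \<Rightarrow> real^4" where
  "clifford_point t = (\<lambda>(z, w).
     vector [t * Re w, t * Im w, sqrt (1 - t^2) * Re z, sqrt (1 - t^2) * Im z])"

definition clifford_coords :: "real \<Rightarrow> real^4 \<Rightarrow> complex \<times> complex" where
  "clifford_coords t y =
     (Complex (y$3 / sqrt (1 - t^2)) (y$4 / sqrt (1 - t^2)), Complex (y$1 / t) (y$2 / t))"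

lemma homeomorphism_clifford_point:
  assumes "0 < t" "t < 1"
  shows "homeomorphism (sphere 0 1 \<times> sphere 0 1) (clifford_torus t)
           (clifford_point t) (clifford_coords t)"
proof
  have "t^2 < 1" using assms by (simp add: power_less_one_iff abs_less_iff)
  then have s: "sqrt (1 - t^2) > 0" "(sqrt (1 - t^2))^2 = 1 - t^2" by simp_all
  show "continuous_on (sphere 0 1 \<times> sphere 0 1) (clifford_point t)"
    unfolding clifford_point_def split_def by (intro continuous_on_vector_4 continuous_intros)
  show "continuous_on (clifford_torus t) (clifford_coords t)"
    unfolding clifford_coords_def using s assms by (intro continuous_intros) auto
  show "clifford_point t ` (sphere 0 1 \<times> sphere 0 1) \<subseteq> clifford_torus t"
    using s by (auto simp: clifford_point_def clifford_torus_def power_mult_distrib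
        simp flip: distrib_left cmod_power2)
  have "clifford_coords t y \<in> sphere 0 1 \<times> sphere 0 1" if "y \<in> clifford_torus t" for y
    using that s assms
    by (auto simp: clifford_coords_def clifford_torus_def norm_complex_def power_divide
        simp flip: add_divide_distrib)
  then show "clifford_coords t ` clifford_torus t \<subseteq> sphere 0 1 \<times> sphere 0 1" by blast
  show "clifford_coords t (clifford_point t p) = p" for p
    using s assms by (auto simp: clifford_coords_def clifford_point_def split_def complex_eq_iff)
  show "clifford_point t (clifford_coords t y) = y" for y
    using s assms by (simp add: clifford_coords_def clifford_point_def vec_eq_iff forall_4)
qed

section \<open>A Moebius transformation of the unit circle\<close>

lemma pos_add_mult_Re:
  assumes "\<bar>r\<bar> < R" "cmod z \<le> 1"
  shows "0 < R + r * Re z"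
proof -
  have "\<bar>r * Re z\<bar> \<le> \<bar>r\<bar>"
    using abs_Re_le_cmod[of z] assms(2) by (simp add: abs_mult mult_left_le)
  then show ?thesis using assms(1) by linarith
qed

(* The angle substitution \<phi> \<mapsto> \<psi> flattening the torus metric, acting on the unit circle. *)
definition circle_mobius :: "real \<Rightarrow> real \<Rightarrow> complex \<Rightarrow> complex" where
  "circle_mobius R r z =
     Complex ((R * Re z + r) / (R + r * Re z)) (sqrt (R^2 - r^2) * Im z / (R + r * Re z))"

lemma norm_circle_mobius:
  assumes "\<bar>r\<bar> < R" "cmod z = 1"
  shows "cmod (circle_mobius R r z) = 1"
proof -
  have unit: "(Re z)^2 + (Im z)^2 = 1" using assms(2) by (simp add: cmod_power2 [symmetric])
  have "r^2 < R^2" using power_strict_mono[of "\<bar>r\<bar>" R 2] assms(1) by simp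
  have "(sqrt (R^2 - r^2) * Im z)^2 = (R^2 - r^2) * (1 - (Re z)^2)"
    using \<open>r^2 < R^2\<close> unit by (simp add: power_mult_distrib)
  then have "(R * Re z + r)^2 + (sqrt (R^2 - r^2) * Im z)^2 = (R + r * Re z)^2"
    by (simp add: algebra_simps power2_eq_square)
  moreover have "0 < R + r * Re z"
    using pos_add_mult_Re[OF assms(1)] assms(2) by simp
  ultimately show ?thesis
    by (simp add: circle_mobius_def norm_complex_def power_divide add_divide_distrib [symmetric])
qed

lemma circle_mobius_inverse:
  assumes "\<bar>r\<bar> < R" "cmod z = 1"
  shows "circle_mobius R (- r) (circle_mobius R r z) = z"
proof -
  define k where "k = sqrt (R^2 - r^2)"
  define d where "d = R + r * Re z"
  define w where "w = circle_mobius R r z"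
  have "r^2 < R^2" using power_strict_mono[of "\<bar>r\<bar>" R 2] assms(1) by simp
  then have k: "k > 0" "k^2 = R^2 - r^2" by (simp_all add: k_def)
  have d: "d > 0" using pos_add_mult_Re[OF assms(1)] assms(2) by (simp add: d_def)
  have w: "Re w = (R * Re z + r) / d" "Im w = k * Im z / d"
    by (simp_all add: w_def circle_mobius_def k_def d_def)
  have den: "R - r * Re w = k^2 / d"
    using d unfolding w k(2) by (simp add: d_def field_simps power2_eq_square)
  have num: "R * Re w - r = k^2 * Re z / d"
    using d unfolding w k(2) by (simp add: d_def field_simps power2_eq_square)
  have "circle_mobius R (- r) w =
      Complex ((R * Re w - r) / (R - r * Re w)) (k * Im w / (R - r * Re w))"
    by (simp add: circle_mobius_def k_def)
  also have "\<dots> = z"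
    unfolding den num using d k(1) by (simp add: w complex_eq_iff power2_eq_square)
  finally show ?thesis by (simp add: w_def)
qed

lemma homeomorphism_circle_mobius:
  assumes "\<bar>r\<bar> < R"
  shows "homeomorphism (sphere 0 1) (sphere 0 1) (circle_mobius R r) (circle_mobius R (- r))"
proof -
  have "continuous_on (sphere 0 1) (circle_mobius R r)" if "\<bar>r\<bar> < R" for r
  proof -
    have "\<forall>z \<in> sphere 0 1. R + r * Re z \<noteq> 0"
      using pos_add_mult_Re[OF that] by (simp add: less_imp_neq [symmetric])
    then show ?thesis unfolding circle_mobius_def by (intro continuous_intros) auto
  qed
  then show ?thesis
    using assms norm_circle_mobius circle_mobius_inverse[of r R] circle_mobius_inverse[of "- r" R]
    by (intro homeomorphismI) auto
qed

lemma has_real_derivative_circle_mobius_cis: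
  fixes R r \<phi> :: real
  assumes "\<bar>r\<bar> < R"
  defines "\<omega> \<equiv> sqrt (R^2 - r^2) / (R + r * cos \<phi>)"
  shows "((\<lambda>x. Re (circle_mobius R r (cis x))) has_real_derivative
           - Im (circle_mobius R r (cis \<phi>)) * \<omega>) (at \<phi>)"
    and "((\<lambda>x. Im (circle_mobius R r (cis x))) has_real_derivative
           Re (circle_mobius R r (cis \<phi>)) * \<omega>) (at \<phi>)"
proof -
  define k where "k = sqrt (R^2 - r^2)"
  define d where "d = R + r * cos \<phi>"
  have "r^2 < R^2" using power_strict_mono[of "\<bar>r\<bar>" R 2] assms(1) by simp
  then have k: "k * k = R^2 - r^2" by (simp add: k_def flip: power2_eq_square)
  have d: "d > 0"
    using pos_add_mult_Re[OF assms(1), of "cis \<phi>"] by (simp add: d_def)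
  have M: "circle_mobius R r (cis x) = Complex ((R * cos x + r) / (R + r * cos x))
             (k * sin x / (R + r * cos x))" for x
    by (simp add: circle_mobius_def k_def)
  have "((\<lambda>x. (R * cos x + r) / (R + r * cos x)) has_real_derivative
          - (R^2 - r^2) * sin \<phi> / d^2) (at \<phi>)"
    using d by (auto intro!: derivative_eq_intros simp: d_def power2_eq_square field_simps)
  moreover have "- (R^2 - r^2) * sin \<phi> / d^2 = - (k * sin \<phi> / d) * (k / d)"
    unfolding k [symmetric] by (simp add: power2_eq_square)
  ultimately show "((\<lambda>x. Re (circle_mobius R r (cis x))) has_real_derivative
           - Im (circle_mobius R r (cis \<phi>)) * \<omega>) (at \<phi>)"
    by (simp add: M \<omega>_def k_def d_def)
  have "((\<lambda>x. k * sin x / (R + r * cos x)) has_real_derivative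
          (k * cos \<phi> * d - k * sin \<phi> * - (r * sin \<phi>)) / (d * d)) (at \<phi>)"
    using d unfolding d_def by (intro DERIV_divide derivative_eq_intros) auto
  moreover have "k * cos \<phi> * d - k * sin \<phi> * - (r * sin \<phi>)
      = (R * cos \<phi> + r) * k"
    using sin_cos_squared_add3[of \<phi>] unfolding d_def by algebra
  ultimately have "((\<lambda>x. k * sin x / (R + r * cos x)) has_real_derivative
          (R * cos \<phi> + r) * k / (d * d)) (at \<phi>)"
    by simp
  then show "((\<lambda>x. Im (circle_mobius R r (cis x))) has_real_derivative
           Re (circle_mobius R r (cis \<phi>)) * \<omega>) (at \<phi>)"
    by (simp add: M \<omega>_def k_def d_def power2_eq_square)
qed

section \<open>The standard torus\<close>

definition torus_point :: "real \<Rightarrow> real \<Rightarrow> complex \<times> complex \<Rightarrow> real^3" where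
  "torus_point R r =
     (\<lambda>(z, w). vector [(R + r * Re w) * Re z, (R + r * Re w) * Im z, r * Im w])"

(* Inverse of torus_point: there x$1 + i x$2 = (R + r Re w) z with R + r Re w > 0. *)
definition torus_coords :: "real \<Rightarrow> real \<Rightarrow> real^3 \<Rightarrow> complex \<times> complex" where
  "torus_coords R r x =
     (sgn (Complex (x$1) (x$2)), Complex ((cmod (Complex (x$1) (x$2)) - R) / r) (x$3 / r))"

lemma torus_param_eq_torus_point: "torus_param R r = torus_point R r \<circ> map_prod cis cis"
  by (auto simp: torus_param_def torus_point_def)

lemma range_torus_param: "range (torus_param R r) = torus_point R r ` (sphere 0 1 \<times> sphere 0 1)"
  unfolding torus_param_eq_torus_point image_comp [symmetric] range_map_prod_cis ..

lemma torus_coords_torus_point: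
  assumes "r \<noteq> 0" "\<bar>r\<bar> < R" "cmod z = 1" "cmod w = 1"
  shows "torus_coords R r (torus_point R r (z, w)) = (z, w)"
proof -
  define \<rho> where "\<rho> = R + r * Re w"
  have "\<rho> > 0" using pos_add_mult_Re[OF assms(2)] assms(4) by (simp add: \<rho>_def)
  have "Complex (\<rho> * Re z) (\<rho> * Im z) = of_real \<rho> * z"
    by (simp add: complex_eq_iff)
  moreover have "sgn z = z" using assms(3) by (simp add: sgn_div_norm)
  ultimately have "cmod (Complex (\<rho> * Re z) (\<rho> * Im z)) = \<rho>"
    and "sgn (Complex (\<rho> * Re z) (\<rho> * Im z)) = z"
    using \<open>\<rho> > 0\<close> assms(3) by (simp_all add: norm_mult sgn_mult sgn_of_real)
  then show ?thesis
    using assms(1) by (simp add: torus_coords_def torus_point_def \<rho>_def [symmetric] complex_eq_iff)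
      (simp add: \<rho>_def)
qed

lemma homeomorphism_torus_point:
  assumes "r \<noteq> 0" "\<bar>r\<bar> < R"
  shows "homeomorphism (torus_point R r ` (sphere 0 1 \<times> sphere 0 1)) (sphere 0 1 \<times> sphere 0 1)
           (torus_coords R r) (torus_point R r)"
proof -
  let ?T = "torus_point R r ` (sphere 0 1 \<times> sphere 0 1)"
  have inverse: "torus_coords R r (torus_point R r p) = p" if "p \<in> sphere 0 1 \<times> sphere 0 1" for p
    using that torus_coords_torus_point[OF assms] by auto
  have "continuous_on UNIV (torus_point R r)"
    unfolding torus_point_def split_def by (intro continuous_on_vector_3 continuous_intros)
  moreover have "Complex (x$1) (x$2) \<noteq> 0" if "x \<in> ?T" for x
  proof
    assume "Complex (x$1) (x$2) = 0"
    then have "fst (torus_coords R r x) = 0" by (simp add: torus_coords_def)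
    with that inverse show False by auto
  qed
  then have "continuous_on ?T (torus_coords R r)"
    unfolding torus_coords_def using assms(1) by (intro continuous_intros) auto
  ultimately show ?thesis
    using inverse by (intro homeomorphismI) (auto intro: continuous_on_subset)
qed

definition torus_dtheta :: "real \<Rightarrow> real \<Rightarrow> real \<times> real \<Rightarrow> real^3" where
  "torus_dtheta R r p = (R + r * cos (snd p)) *\<^sub>R vector [- sin (fst p), cos (fst p), 0]"

definition torus_dphi :: "real \<Rightarrow> real \<Rightarrow> real \<times> real \<Rightarrow> real^3" where
  "torus_dphi R r p =
     r *\<^sub>R vector [- sin (snd p) * cos (fst p), - sin (snd p) * sin (fst p), cos (snd p)]"

lemma has_derivative_torus_param:
  "(torus_param R r has_derivative partials_map (torus_dtheta R r p) (torus_dphi R r p)) (at p)"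
proof -
  have "torus_param R r = (\<lambda>p. vector [(R + r * cos (snd p)) * cos (fst p),
          (R + r * cos (snd p)) * sin (fst p), r * sin (snd p)])"
    by (auto simp: torus_param_def)
  then show ?thesis
    by (auto intro!: has_derivative_eq_rhs [OF has_derivative_vector_3] derivative_eq_intros
        simp: partials_map_def torus_dtheta_def torus_dphi_def vec_eq_iff forall_3 algebra_simps)
qed

section \<open>The conformal map onto the Clifford torus\<close>

definition torus_to_clifford :: "real \<Rightarrow> real \<Rightarrow> real \<times> real \<Rightarrow> real^4" where
  "torus_to_clifford R r p = clifford_point (r / R) (cis (fst p), circle_mobius R r (cis (snd p)))"

lemma torus_to_clifford_eq_comp:
  assumes "r \<noteq> 0" "\<bar>r\<bar> < R"
  shows "clifford_point (r / R) \<circ> apsnd (circle_mobius R r) \<circ> torus_coords R r \<circ>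
           torus_param R r = torus_to_clifford R r"
  by (auto simp: torus_param_eq_torus_point torus_coords_torus_point [OF assms]
      torus_to_clifford_def)

definition torus_to_clifford_dtheta :: "real \<Rightarrow> real \<Rightarrow> real \<times> real \<Rightarrow> real^4" where
  "torus_to_clifford_dtheta R r p =
     sqrt (1 - (r / R)^2) *\<^sub>R vector [0, 0, - sin (fst p), cos (fst p)]"

definition torus_to_clifford_dphi :: "real \<Rightarrow> real \<Rightarrow> real \<times> real \<Rightarrow> real^4" where
  "torus_to_clifford_dphi R r p =
     (r / R * (sqrt (R^2 - r^2) / (R + r * cos (snd p)))) *\<^sub>R
       vector [- Im (circle_mobius R r (cis (snd p))), Re (circle_mobius R r (cis (snd p))), 0, 0]"

lemma has_derivative_torus_to_clifford:
  assumes "\<bar>r\<bar> < R"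
  shows "(torus_to_clifford R r has_derivative
           partials_map (torus_to_clifford_dtheta R r p) (torus_to_clifford_dphi R r p)) (at p)"
proof -
  have eq: "torus_to_clifford R r = (\<lambda>p. vector [r / R * Re (circle_mobius R r (cis (snd p))),
          r / R * Im (circle_mobius R r (cis (snd p))),
          sqrt (1 - (r / R)^2) * cos (fst p), sqrt (1 - (r / R)^2) * sin (fst p)])"
    by (auto simp: torus_to_clifford_def clifford_point_def)
  show ?thesis
    unfolding eq
    by (rule has_derivative_eq_rhs,
        (rule has_derivative_vector_4 has_derivative_mult_right has_derivative_comp_snd
          has_derivative_comp_fst has_real_derivative_circle_mobius_cis [OF assms]
          DERIV_cos DERIV_sin)+)
      (auto simp: partials_map_def torus_to_clifford_dtheta_def torus_to_clifford_dphi_def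
        vec_eq_iff forall_4 algebra_simps)
qed

lemma torus_to_clifford_conformal:
  fixes p :: "real \<times> real"
  assumes "\<bar>r\<bar> < R"
  defines "\<mu> \<equiv> (1 - (r / R)^2) / (R + r * cos (snd p))^2"
  shows "partials_map (torus_to_clifford_dtheta R r p) (torus_to_clifford_dphi R r p) u \<bullet>
         partials_map (torus_to_clifford_dtheta R r p) (torus_to_clifford_dphi R r p) v =
         \<mu> * (partials_map (torus_dtheta R r p) (torus_dphi R r p) u \<bullet>
              partials_map (torus_dtheta R r p) (torus_dphi R r p) v)"
proof (rule inner_partials_map_conformal)
  define \<rho> where "\<rho> = R + r * cos (snd p)"
  define m where "m = circle_mobius R r (cis (snd p))"
  have "\<rho> > 0" using pos_add_mult_Re[OF assms(1), of "cis (snd p)"] by (simp add: \<rho>_def)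
  have "r^2 < R^2" using power_strict_mono[of "\<bar>r\<bar>" R 2] assms(1) by simp
  moreover have "R > 0" using assms(1) by linarith
  ultimately have R: "R \<noteq> 0" "(r / R)^2 < 1" by (simp_all add: power_divide)
  have m: "(Re m)^2 + (Im m)^2 = 1"
    using norm_circle_mobius[OF assms(1)] by (simp add: m_def flip: cmod_power2)
  show "torus_dtheta R r p \<bullet> torus_dphi R r p = 0"
    by (simp add: torus_dtheta_def torus_dphi_def inner_vector_3 algebra_simps)
  show "torus_to_clifford_dtheta R r p \<bullet> torus_to_clifford_dphi R r p = 0"
    by (simp add: torus_to_clifford_dtheta_def torus_to_clifford_dphi_def inner_vector_4)
  have "torus_to_clifford_dtheta R r p \<bullet> torus_to_clifford_dtheta R r p = 1 - (r / R)^2"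
    using R(2) by (simp add: torus_to_clifford_dtheta_def inner_vector_4 flip: power2_eq_square)
  moreover have "torus_dtheta R r p \<bullet> torus_dtheta R r p = \<rho>^2"
    by (simp add: torus_dtheta_def inner_vector_3 \<rho>_def flip: power2_eq_square)
  ultimately show "torus_to_clifford_dtheta R r p \<bullet> torus_to_clifford_dtheta R r p =
      \<mu> * (torus_dtheta R r p \<bullet> torus_dtheta R r p)"
    using \<open>\<rho> > 0\<close> by (simp add: \<mu>_def \<rho>_def [symmetric])
  have "vector [- Im m, Re m, 0, 0] \<bullet> (vector [- Im m, Re m, 0, 0] :: real^4) = 1"
    using m by (simp add: inner_vector_4 power2_eq_square)
  then have "torus_to_clifford_dphi R r p \<bullet> torus_to_clifford_dphi R r p =
      (r / R * (sqrt (R^2 - r^2) / \<rho>))^2"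
    by (simp add: torus_to_clifford_dphi_def m_def [symmetric] \<rho>_def [symmetric] power2_eq_square)
  also have "\<dots> = (r / R)^2 * (R^2 - r^2) / \<rho>^2"
    using \<open>r^2 < R^2\<close> by (simp add: power_mult_distrib power_divide)
  finally have "torus_to_clifford_dphi R r p \<bullet> torus_to_clifford_dphi R r p =
      (r / R)^2 * (R^2 - r^2) / \<rho>^2" .
  moreover have "torus_dphi R r p \<bullet> torus_dphi R r p = r^2"
    using sin_cos_squared_add [of "fst p"] sin_cos_squared_add [of "snd p"]
    unfolding torus_dphi_def inner_scaleR_left inner_scaleR_right inner_vector_3 by algebra
  ultimately show "torus_to_clifford_dphi R r p \<bullet> torus_to_clifford_dphi R r p =
      \<mu> * (torus_dphi R r p \<bullet> torus_dphi R r p)"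
    using R(1) by (simp add: \<mu>_def \<rho>_def [symmetric] field_simps)
qed

lemma continuous_on_torus_to_clifford_partials:
  assumes "\<bar>r\<bar> < R"
  shows "continuous_on UNIV (torus_to_clifford_dtheta R r)"
    and "continuous_on UNIV (torus_to_clifford_dphi R r)"
proof -
  have "R \<noteq> 0" using assms by linarith
  moreover have "R + r * cos x \<noteq> 0" for x
    using pos_add_mult_Re[OF assms, of "cis x"] by simp
  ultimately show "continuous_on UNIV (torus_to_clifford_dtheta R r)"
    and "continuous_on UNIV (torus_to_clifford_dphi R r)"
    unfolding torus_to_clifford_dtheta_def torus_to_clifford_dphi_def circle_mobius_def
    by (auto intro!: continuous_on_vector_4 continuous_intros)
qed

lemma torus_to_clifford_conformal_derivative:
  assumes "\<bar>r\<bar> < R"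
  shows "\<exists>D \<mu>. (\<forall>p. (torus_to_clifford R r has_derivative blinfun_apply (D p)) (at p)) \<and>
           continuous_on UNIV D \<and>
           (\<forall>p. \<mu> p > (0::real) \<and>
              (\<forall>u v. blinfun_apply (D p) u \<bullet> blinfun_apply (D p) v =
                 \<mu> p * (frechet_derivative (torus_param R r) (at p) u \<bullet>
                        frechet_derivative (torus_param R r) (at p) v)))"
proof (intro exI conjI allI)
  define D where "D p = Blinfun (partials_map (torus_to_clifford_dtheta R r p)
                                              (torus_to_clifford_dphi R r p))" for p
  define \<mu> where "\<mu> p = (1 - (r / R)^2) / (R + r * cos (snd p))^2" for p :: "real \<times> real"
  have D: "blinfun_apply (D p) = partials_map (torus_to_clifford_dtheta R r p)
                                              (torus_to_clifford_dphi R r p)" for p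
    by (simp add: D_def bounded_linear_Blinfun_apply bounded_linear_partials_map)
  fix p :: "real \<times> real"
  show "(torus_to_clifford R r has_derivative blinfun_apply (D p)) (at p)"
    unfolding D by (rule has_derivative_torus_to_clifford [OF assms])
  show "continuous_on UNIV D"
    unfolding D_def
    by (intro continuous_on_Blinfun_partials_map continuous_on_torus_to_clifford_partials assms)
  have "r^2 < R^2" using power_strict_mono[of "\<bar>r\<bar>" R 2] assms by simp
  moreover have "R > 0" using assms by linarith
  moreover have "R + r * cos (snd p) \<noteq> 0"
    using pos_add_mult_Re[OF assms, of "cis (snd p)"] by simp
  ultimately show "\<mu> p > 0" by (simp add: \<mu>_def power_divide)
  fix u v
  show "blinfun_apply (D p) u \<bullet> blinfun_apply (D p) v =
        \<mu> p * (frechet_derivative (torus_param R r) (at p) u \<bullet>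
               frechet_derivative (torus_param R r) (at p) v)"
    unfolding D \<mu>_def frechet_derivative_at [OF has_derivative_torus_param, symmetric]
    by (rule torus_to_clifford_conformal [OF assms])
qed

theorem corollary3:
  fixes R r t :: real
  assumes "R > r" and "r > 0" and "R / r > sqrt 2" and "t = r / R"
  shows "conformally_equivalent (torus_param R r) (hopf_torus (circle_pt t))"
proof -
  have radii: "r \<noteq> 0" "\<bar>r\<bar> < R" and t: "0 < r / R" "r / R < 1"
    using assms(1,2) by auto
  have Y: "hopf_torus (circle_pt t) = clifford_torus (r / R)"
    using hopf_torus_circle_pt [OF t] assms(4) by simp
  have homeo: "homeomorphism (range (torus_param R r)) (clifford_torus (r / R))
      (clifford_point (r / R) \<circ> apsnd (circle_mobius R r) \<circ> torus_coords R r)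
      (torus_point R r \<circ> (apsnd (circle_mobius R (- r)) \<circ> clifford_coords (r / R)))"
    unfolding range_torus_param
    by (rule homeomorphism_compose [OF homeomorphism_torus_point [OF radii]
          homeomorphism_compose [OF homeomorphism_apsnd [OF homeomorphism_circle_mobius [OF radii(2)]]
            homeomorphism_clifford_point [OF t]]])
  show ?thesis
    unfolding conformally_equivalent_def Y
    using homeo torus_to_clifford_conformal_derivative [OF radii(2),
        folded torus_to_clifford_eq_comp [OF radii]]
    by blast
qed

end
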